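(* For every finite simple graph $G$, $\gamma_{sR}(G\vee K_1)\geq 1$. Moreover, if $\gamma_{sR}(G)=0$, then $\gamma_{sR}(G\vee K_1)=1$.
   Context: For a graph $G=(V,E)$ and $x\in V$, $N_G[x]=\{x\}\cup\{y: xy\in E\}$. A signed Roman dominating function (SRDF) on $G$ is a function $f:V\to\{-1,1,2\}$ such that (a) $\sum_{y\in N_G[x]}f(y)\geq 1$ for every $x\in V$, and (b) every vertex $x$ with $f(x)=-1$ is adjacent to at least one vertex $y$ with $f(y)=2$. The weight of $f$ is $\sum_{x\in V}f(x)$, and $\gamma_{sR}(G)$ is the minimum weight of an SRDF on $G$. The join $G_1\vee G_2$ of two graphs has vertex set $V(G_1)\cup V(G_2)$ (disjoint union) and edge set $E(G_1)\cup E(G_2)\cup\{uv: u\in V(G_1), v\in V(G_2)\}$. $K_1$ is the graph with a single vertex. *)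

theory Defs
  imports Main
begin

definition simple_graph :: "'a set \<Rightarrow> ('a \<Rightarrow> 'a \<Rightarrow> bool) \<Rightarrow> bool" where
  "simple_graph V E \<longleftrightarrow> finite V \<and> (\<forall>x y. E x y \<longrightarrow> x \<in> V \<and> y \<in> V)
     \<and> (\<forall>x y. E x y \<longrightarrow> E y x) \<and> (\<forall>x. \<not> E x x)"

definition closed_nbhd :: "'a set \<Rightarrow> ('a \<Rightarrow> 'a \<Rightarrow> bool) \<Rightarrow> 'a \<Rightarrow> 'a set" where
  "closed_nbhd V E x = {x} \<union> {y \<in> V. E x y}"

definition is_SRDF :: "'a set \<Rightarrow> ('a \<Rightarrow> 'a \<Rightarrow> bool) \<Rightarrow> ('a \<Rightarrow> int) \<Rightarrow> bool" where
  "is_SRDF V E f \<longleftrightarrow>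
     (\<forall>x\<in>V. f x \<in> {-1, 1, 2})
     \<and> (\<forall>x\<in>V. (\<Sum>y\<in>closed_nbhd V E x. f y) \<ge> 1)
     \<and> (\<forall>x\<in>V. f x = -1 \<longrightarrow> (\<exists>y\<in>V. E x y \<and> f y = 2))"

definition weight :: "'a set \<Rightarrow> ('a \<Rightarrow> int) \<Rightarrow> int" where
  "weight V f = (\<Sum>x\<in>V. f x)"

text \<open>Signed Roman domination number: minimum weight of an SRDF
  (the set of weights is finite and nonempty for finite V: the constant 1 is an SRDF).\<close>
definition gamma_sR :: "'a set \<Rightarrow> ('a \<Rightarrow> 'a \<Rightarrow> bool) \<Rightarrow> int" where
  "gamma_sR V E = Min {weight V f | f. is_SRDF V E f}"

text \<open>Join G \<or> K_1: the new vertex is None, old vertices are Some x.\<close>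
definition join_K1_V :: "'a set \<Rightarrow> 'a option set" where
  "join_K1_V V = insert None (Some ` V)"

fun join_K1_E :: "'a set \<Rightarrow> ('a \<Rightarrow> 'a \<Rightarrow> bool) \<Rightarrow> 'a option \<Rightarrow> 'a option \<Rightarrow> bool" where
  "join_K1_E V E (Some x) (Some y) = E x y"
| "join_K1_E V E None (Some y) = (y \<in> V)"
| "join_K1_E V E (Some x) None = (x \<in> V)"
| "join_K1_E V E None None = False"

end

theory Submission
  imports Defs
begin

text \<open>The apex of G \<or> K1 is adjacent to every vertex, so the domination condition at the apex
  alone already forces every SRDF of the join to have weight at least 1. Conversely, an SRDF of
  G of weight 0 extends to the join by giving the apex the value 1: every old closed
  neighbourhood gains the apex, and the apex's closed neighbourhood sums to 0 + 1.\<close>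

lemma is_SRDF_weight_bounds:
  assumes "is_SRDF V E f"
  shows "- int (card V) \<le> weight V f \<and> weight V f \<le> 2 * int (card V)"
proof -
  have range: "\<forall>x\<in>V. -1 \<le> f x \<and> f x \<le> 2" using assms unfolding is_SRDF_def by auto
  have "(\<Sum>x\<in>V. (-1::int)) \<le> (\<Sum>x\<in>V. f x)" by (rule sum_mono) (use range in auto)
  moreover have "(\<Sum>x\<in>V. f x) \<le> (\<Sum>x\<in>V. (2::int))" by (rule sum_mono) (use range in auto)
  ultimately show ?thesis unfolding weight_def by simp
qed

lemma finite_closed_nbhd: "finite V \<Longrightarrow> finite (closed_nbhd V E x)"
  unfolding closed_nbhd_def by auto

lemma is_SRDF_const_1:
  assumes "finite V"
  shows "is_SRDF V E (\<lambda>_. 1)"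
proof -
  have "(\<Sum>y\<in>closed_nbhd V E x. (1::int)) \<ge> 1" for x
  proof -
    have "x \<in> closed_nbhd V E x" unfolding closed_nbhd_def by auto
    hence "card (closed_nbhd V E x) \<ge> 1"
      using finite_closed_nbhd[OF assms] by (metis One_nat_def Suc_leI card_gt_0_iff empty_iff)
    thus ?thesis by simp
  qed
  thus ?thesis unfolding is_SRDF_def by auto
qed

lemma finite_SRDF_weights: "finite {weight V f | f. is_SRDF V E f}"
  by (rule finite_subset[of _ "{- int (card V) .. 2 * int (card V)}"])
     (use is_SRDF_weight_bounds in fastforce, simp)

lemma gamma_sR_le_weight:
  assumes "is_SRDF V E f"
  shows "gamma_sR V E \<le> weight V f"
  unfolding gamma_sR_def using finite_SRDF_weights assms by (intro Min_le) auto

lemma gamma_sR_attained: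
  assumes "finite V"
  obtains f where "is_SRDF V E f" "gamma_sR V E = weight V f"
proof -
  have "{weight V f | f. is_SRDF V E f} \<noteq> {}" using is_SRDF_const_1[OF assms] by auto
  hence "gamma_sR V E \<in> {weight V f | f. is_SRDF V E f}"
    unfolding gamma_sR_def using Min_in finite_SRDF_weights by blast
  thus ?thesis using that by auto
qed

lemma gamma_sR_ge_1_if_universal_vertex:
  assumes "finite V" "v \<in> V" "closed_nbhd V E v = V"
  shows "gamma_sR V E \<ge> 1"
proof -
  obtain f where f: "is_SRDF V E f" "gamma_sR V E = weight V f"
    using gamma_sR_attained[OF assms(1)] by blast
  have "(\<Sum>y\<in>closed_nbhd V E v. f y) \<ge> 1" using f(1) assms(2) unfolding is_SRDF_def by blast
  thus ?thesis using f(2) assms(3) unfolding weight_def by simp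
qed

lemma finite_join_K1_V: "finite V \<Longrightarrow> finite (join_K1_V V)"
  unfolding join_K1_V_def by auto

lemma closed_nbhd_join_K1_None: "closed_nbhd (join_K1_V V) (join_K1_E V E) None = join_K1_V V"
  unfolding closed_nbhd_def join_K1_V_def by (auto elim: join_K1_E.elims)

lemma closed_nbhd_join_K1_Some:
  assumes "simple_graph V E" "x \<in> V"
  shows "closed_nbhd (join_K1_V V) (join_K1_E V E) (Some x) = insert None (Some ` closed_nbhd V E x)"
  using assms unfolding closed_nbhd_def join_K1_V_def simple_graph_def by auto

lemma sum_case_option_insert_None:
  assumes "finite A"
  shows "(\<Sum>y\<in>insert None (Some ` A). case_option c g y) = c + sum g A"
  using assms by (simp add: sum.reindex)

lemma weight_join_K1:
  "finite V \<Longrightarrow> weight (join_K1_V V) (case_option c g) = c + weight V g"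
  unfolding weight_def join_K1_V_def by (rule sum_case_option_insert_None)

lemma is_SRDF_join_K1_extend:
  assumes G: "simple_graph V E" and g: "is_SRDF V E g" and nonneg: "weight V g \<ge> 0"
  shows "is_SRDF (join_K1_V V) (join_K1_E V E) (case_option 1 g)"
  unfolding is_SRDF_def
proof (intro conjI ballI impI)
  have finV: "finite V" using G unfolding simple_graph_def by auto
  fix u assume u: "u \<in> join_K1_V V"
  show "case_option 1 g u \<in> {-1, 1, 2}"
    using u g unfolding join_K1_V_def is_SRDF_def by auto
  show "(\<Sum>y\<in>closed_nbhd (join_K1_V V) (join_K1_E V E) u. case_option 1 g y) \<ge> 1"
  proof (cases u)
    case None
    thus ?thesis using nonneg weight_join_K1[OF finV]
      by (simp add: closed_nbhd_join_K1_None weight_def)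
  next
    case (Some x)
    hence x: "x \<in> V" using u unfolding join_K1_V_def by auto
    have "(\<Sum>y\<in>closed_nbhd V E x. g y) \<ge> 1" using g x unfolding is_SRDF_def by blast
    moreover have "(\<Sum>y\<in>insert None (Some ` closed_nbhd V E x). case_option 1 g y)
        = 1 + (\<Sum>y\<in>closed_nbhd V E x. g y)"
      using sum_case_option_insert_None finite_closed_nbhd[OF finV] by blast
    ultimately show ?thesis using Some closed_nbhd_join_K1_Some[OF G x] by simp
  qed
next
  fix u assume u: "u \<in> join_K1_V V" and neg: "case_option 1 g u = -1"
  then obtain x where ux: "u = Some x" "x \<in> V" "g x = -1"
    unfolding join_K1_V_def by (auto split: option.splits)
  then obtain y where "y \<in> V" "E x y" "g y = 2" using g unfolding is_SRDF_def by blast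
  thus "\<exists>y\<in>join_K1_V V. join_K1_E V E u y \<and> case_option 1 g y = 2"
    using ux by (intro bexI[of _ "Some y"]) (auto simp: join_K1_V_def)
qed

lemma gamma_sR_join_K1_le:
  assumes G: "simple_graph V E" and nonneg: "gamma_sR V E \<ge> 0"
  shows "gamma_sR (join_K1_V V) (join_K1_E V E) \<le> gamma_sR V E + 1"
proof -
  have finV: "finite V" using G unfolding simple_graph_def by auto
  obtain g where g: "is_SRDF V E g" "gamma_sR V E = weight V g"
    using gamma_sR_attained[OF finV] by blast
  have "is_SRDF (join_K1_V V) (join_K1_E V E) (case_option 1 g)"
    using is_SRDF_join_K1_extend[OF G g(1)] g(2) nonneg by simp
  from gamma_sR_le_weight[OF this] show ?thesis
    using g(2) weight_join_K1[OF finV] by simp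
qed

theorem mainTheorem2:
  fixes V :: "'a set" and E :: "'a \<Rightarrow> 'a \<Rightarrow> bool"
  assumes "simple_graph V E"
  shows "gamma_sR (join_K1_V V) (join_K1_E V E) \<ge> 1
     \<and> (gamma_sR V E = 0 \<longrightarrow> gamma_sR (join_K1_V V) (join_K1_E V E) = 1)"
proof -
  have finV: "finite V" using assms unfolding simple_graph_def by auto
  have lower: "gamma_sR (join_K1_V V) (join_K1_E V E) \<ge> 1"
    by (rule gamma_sR_ge_1_if_universal_vertex[of _ None])
       (simp_all add: finite_join_K1_V[OF finV] closed_nbhd_join_K1_None, simp add: join_K1_V_def)
  have "gamma_sR (join_K1_V V) (join_K1_E V E) \<le> 1" if "gamma_sR V E = 0"
    using gamma_sR_join_K1_le[OF assms] that by simp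
  with lower show ?thesis by auto
qed

end
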